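(* Let $\varPhi$ be a family of open intervals contained in $[0,1]$. Suppose there is $C>0$ such that for every interval $(a,b)\subset[0,1]$ there exists $\varDelta(a,b)\in\varPhi$ with (a) $\frac{a+b}{2}\in\varDelta(a,b)$, (b) $\varDelta(a,b)\subset(a,b)$, (c) $\frac{b-a}{|\varDelta(a,b)|}\le C$. Then $\varPhi$ is faithful for packing dimension calculation, i.e. $\dim_{P}(E,\varPhi)=\dim_{P(\mathit{unc})}(E)$ for every $E\subset[0,1]$.
   Context: Work in $\mathbb R$ with the usual metric; $|A|$ is the length (diameter). An uncentered $\varepsilon$-packing of $E$ is a finite or countable family of pairwise disjoint open intervals $E_i$ with $|E_i|\le\varepsilon$ and $E_i\cap E\ne\varnothing$. For $\alpha\ge0$: $\mathcal P^\alpha_{\varepsilon(\mathit{unc})}(E)=\sup\sum_i|E_i|^\alpha$ over uncentered $\varepsilon$-packings; $\mathcal P^\alpha_{0(\mathit{unc})}=\lim_{\varepsilon\to0}\mathcal P^\alpha_{\varepsilon(\mathit{unc})}$; $\mathcal P^\alpha_{(\mathit{unc})}(E)=\inf\{\sum_j\mathcal P^\alpha_{0(\mathit{unc})}(E_j):E\subset\bigcup_jE_j\}$ over countable covers; $\dim_{P(\mathit{unc})}(E)=\inf\{\alpha:\mathcal P^\alpha_{(\mathit{unc})}(E)=0\}$. $\dim_P(E,\varPhi)$ is defined identically but using only uncentered packings by intervals from $\varPhi$ (empty packing gives $0$). *)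

theory Defs
  imports "HOL-Analysis.Analysis"
begin

definition open_intervals :: "real set set" where
  "open_intervals = {{a<..<b} | a b. a < b}"

definition is_packing :: "real set set \<Rightarrow> real \<Rightarrow> real set \<Rightarrow> real set set \<Rightarrow> bool" where
  "is_packing Phi eps E P \<longleftrightarrow> countable P \<and> P \<subseteq> Phi \<inter> open_intervals \<and> disjoint P \<and>
     (\<forall>I\<in>P. diameter I \<le> eps \<and> I \<inter> E \<noteq> {})"

definition pack_sum :: "real \<Rightarrow> real set set \<Rightarrow> ennreal" where
  "pack_sum \<alpha> P = (SUP F\<in>{F. finite F \<and> F \<subseteq> P}. ennreal (\<Sum>I\<in>F. diameter I powr \<alpha>))"

definition P_eps :: "real set set \<Rightarrow> real \<Rightarrow> real \<Rightarrow> real set \<Rightarrow> ennreal" where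
  "P_eps Phi \<alpha> eps E = (SUP P\<in>{P. is_packing Phi eps E P}. pack_sum \<alpha> P)"

text \<open>P_eps is monotone in eps, so the limit eps -> 0 is the infimum over eps > 0.\<close>
definition P_zero :: "real set set \<Rightarrow> real \<Rightarrow> real set \<Rightarrow> ennreal" where
  "P_zero Phi \<alpha> E = (INF eps\<in>{0<..}. P_eps Phi \<alpha> eps E)"

definition P_meas :: "real set set \<Rightarrow> real \<Rightarrow> real set \<Rightarrow> ennreal" where
  "P_meas Phi \<alpha> E = (INF A\<in>{A :: nat \<Rightarrow> real set. E \<subseteq> (\<Union>j. A j)}. (\<Sum>j. P_zero Phi \<alpha> (A j)))"

definition dim_P :: "real set set \<Rightarrow> real set \<Rightarrow> real" where
  "dim_P Phi E = Inf {\<alpha>. 0 \<le> \<alpha> \<and> P_meas Phi \<alpha> E = 0}"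

definition dim_P_unc :: "real set \<Rightarrow> real" where
  "dim_P_unc E = dim_P open_intervals E"

end

theory Submission
  imports Defs
begin

(*
  Packing by intervals from Phi only lowers the packing premeasures, so dim_P(E,Phi) is at most the
  uncentered packing dimension. Conversely, suppose the Phi-premeasure P^alpha_0(A) is finite, with
  P^alpha_eps(A) <= Q. Given an uncentered packing of A whose intervals have length in (L, 2L],
  L = 2^-(k+1), keep every other interval from the left: the retained intervals contain points of A
  at mutual distance at least L. Around each such point away from the ends of [0,1] the hypothesis
  centres a Phi-interval of length at least L/C inside a window of width L; these windows are
  disjoint, so the Phi-intervals form a packing and there are at most Q (C/L)^alpha of them. Hence
  the packing has O(1 + 2^(k alpha)) members, contributing O(2^(-k beta) + 2^(k (alpha - beta))) to
  the beta-sum; summing over the dyadic scales k >= k0 shows P^beta_0(A) = 0 for every beta > alpha.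
*)

lemma P_eps_mono:
  assumes "eps \<le> eps'" "Phi \<subseteq> Psi" "B \<subseteq> A"
  shows "P_eps Phi \<alpha> eps B \<le> P_eps Psi \<alpha> eps' A"
  unfolding P_eps_def
proof (rule SUP_mono)
  fix P assume "P \<in> {P. is_packing Phi eps B P}"
  then have "is_packing Psi eps' A P" using assms unfolding is_packing_def by fastforce
  then show "\<exists>m\<in>{P. is_packing Psi eps' A P}. pack_sum \<alpha> P \<le> pack_sum \<alpha> m" by auto
qed

lemma P_zero_mono:
  assumes "Phi \<subseteq> Psi" "B \<subseteq> A"
  shows "P_zero Phi \<alpha> B \<le> P_zero Psi \<alpha> A"
  unfolding P_zero_def by (rule INF_mono) (use P_eps_mono[OF _ assms] in auto)

lemma P_meas_mono:
  assumes "Phi \<subseteq> Psi"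
  shows "P_meas Phi \<alpha> E \<le> P_meas Psi \<alpha> E"
  unfolding P_meas_def
  by (rule INF_mono) (auto intro!: suminf_le summableI P_zero_mono[OF assms])

lemma is_packing_subset: "is_packing Phi eps A P \<Longrightarrow> F \<subseteq> P \<Longrightarrow> is_packing Phi eps A F"
  unfolding is_packing_def by (auto intro: countable_subset pairwise_subset)

lemma sum_le_P_eps:
  assumes "is_packing Phi eps A P" "finite P"
  shows "ennreal (\<Sum>I\<in>P. diameter I powr \<alpha>) \<le> P_eps Phi \<alpha> eps A"
proof -
  have "ennreal (\<Sum>I\<in>P. diameter I powr \<alpha>) \<le> pack_sum \<alpha> P"
    unfolding pack_sum_def using assms(2) by (intro SUP_upper) auto
  also have "\<dots> \<le> P_eps Phi \<alpha> eps A"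
    unfolding P_eps_def using assms(1) by (intro SUP_upper) auto
  finally show ?thesis .
qed

lemma P_eps_le_if_finite_packings:
  assumes "\<And>F. finite F \<Longrightarrow> is_packing Phi eps A F \<Longrightarrow> (\<Sum>I\<in>F. diameter I powr \<alpha>) \<le> B"
  shows "P_eps Phi \<alpha> eps A \<le> ennreal B"
  unfolding P_eps_def pack_sum_def
  using assms is_packing_subset by (fastforce intro!: SUP_least ennreal_leI)

definition separated_by :: "real \<Rightarrow> ('a \<Rightarrow> real) \<Rightarrow> 'a set \<Rightarrow> bool" where
  "separated_by L x Y \<longleftrightarrow> (\<forall>i\<in>Y. \<forall>j\<in>Y. i \<noteq> j \<longrightarrow> L \<le> \<bar>x i - x j\<bar>)"

lemma card_separated_le_1:
  assumes "finite Y" "separated_by L x Y" "\<And>i j. i \<in> Y \<Longrightarrow> j \<in> Y \<Longrightarrow> \<bar>x i - x j\<bar> < L"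
  shows "card Y \<le> 1"
  using assms by (force simp: card_le_Suc0_iff_eq separated_by_def)

lemma card_separated_le_interior:
  fixes x :: "'a \<Rightarrow> real"
  assumes "finite Y" "separated_by L x Y" "\<And>i. i \<in> Y \<Longrightarrow> 0 \<le> x i \<and> x i \<le> 1"
  shows "card Y \<le> card {i\<in>Y. L/2 \<le> x i \<and> x i \<le> 1 - L/2} + 2"
proof -
  let ?inner = "{i\<in>Y. L/2 \<le> x i \<and> x i \<le> 1 - L/2}"
  let ?left = "{i\<in>Y. x i < L/2}" and ?right = "{i\<in>Y. 1 - L/2 < x i}"
  have separated: "separated_by L x Z" if "Z \<subseteq> Y" for Z
    using assms(2) that unfolding separated_by_def by blast
  have "card ?left \<le> 1" "card ?right \<le> 1"
    by (rule card_separated_le_1[OF _ separated]; use assms in \<open>force simp: abs_if\<close>)+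
  moreover have "card Y \<le> card ?inner + card ?left + card ?right"
  proof -
    have "card Y \<le> card (?inner \<union> ?left \<union> ?right)"
      using assms(1) by (intro card_mono) auto
    also have "\<dots> \<le> card ?inner + card ?left + card ?right"
      by (meson add_right_mono card_Un_le order_trans)
    finally show ?thesis .
  qed
  ultimately show ?thesis by linarith
qed

(* Keep every other interval from the left: between two kept intervals lies a discarded one,
   which is longer than L. *)
lemma half_separated_subset:
  fixes lo hi x :: "'a \<Rightarrow> real"
  assumes "finite S"
    and "\<And>i. i \<in> S \<Longrightarrow> lo i < x i \<and> x i < hi i \<and> L < hi i - lo i"
    and "\<And>i j. i \<in> S \<Longrightarrow> j \<in> S \<Longrightarrow> i \<noteq> j \<Longrightarrow> hi i \<le> lo j \<or> hi j \<le> lo i"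
  shows "\<exists>Y\<subseteq>S. card S \<le> 2 * card Y \<and> separated_by L x Y"
  using assms
proof (induction "card S" arbitrary: S rule: less_induct)
  case less
  note finS = less.prems(1) and inside = less.prems(2) and apart = less.prems(3)
  have leftmost: "\<exists>i\<in>T. \<forall>j\<in>T. lo i \<le> lo j" if "T \<subseteq> S" "T \<noteq> {}" for T
    using ex_is_arg_min_if_finite[of T lo] that finite_subset[OF _ finS]
    by (auto simp: is_arg_min_linorder)
  show ?case
  proof (cases "card S \<le> 1")
    case True
    then show ?thesis
      using finS by (intro exI[of _ S]) (auto simp: separated_by_def card_le_Suc0_iff_eq)
  next
    case False
    then obtain i0 where i0: "i0 \<in> S" "\<forall>j\<in>S. lo i0 \<le> lo j"
      using leftmost[of S] by fastforce
    have "S - {i0} \<noteq> {}"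
      using False i0(1) by (auto simp: card_le_Suc0_iff_eq[OF finS])
    then obtain i1 where i1: "i1 \<in> S" "i1 \<noteq> i0" "\<forall>j\<in>S - {i0}. lo i1 \<le> lo j"
      using leftmost[of "S - {i0}"] by blast
    define R where "R = S - {i0, i1}"
    have card_S: "card S = card R + 2"
      using finS i0(1) i1(1,2) card_mono[OF finS, of "{i0, i1}"] unfolding R_def
      by (simp add: card_Diff_subset)
    then obtain Y where Y: "Y \<subseteq> R" "card R \<le> 2 * card Y" "separated_by L x Y"
      using less.hyps[of R] finS inside apart unfolding R_def by force
    have "lo i0 \<le> lo i1"
      using i0(2) i1(1) by blast
    then have "hi i0 \<le> lo i1"
      using apart[OF i0(1) i1(1)] i1(2) inside[OF i1(1)] by force
    then have far: "L \<le> x j - x i0" if "j \<in> R" for j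
      using that apart[of i1 j] i1 inside[OF i0(1)] inside[OF i1(1)] inside[of j]
      unfolding R_def by force
    have "separated_by L x (insert i0 Y)"
      using Y(1,3) far unfolding separated_by_def by (fastforce simp: abs_minus_commute)
    moreover have "card (insert i0 Y) = card Y + 1"
      using Y(1) finite_subset[of Y S] finS unfolding R_def by (subst card_insert_disjoint) auto
    ultimately show ?thesis
      using Y(1,2) i0(1) card_S unfolding R_def by (intro exI[of _ "insert i0 Y"]) auto
  qed
qed

lemma disjoint_open_intervals_ordered:
  fixes a b c d :: real
  assumes "{a<..<b} \<inter> {c<..<d} = {}" "a < b" "c < d"
  shows "b \<le> c \<or> d \<le> a"
proof (rule ccontr)
  assume "\<not> (b \<le> c \<or> d \<le> a)"
  then have "(max a c + min b d) / 2 \<in> {a<..<b} \<inter> {c<..<d}"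
    using assms(2,3) by (auto simp: max_def min_def)
  then show False using assms(1) by blast
qed

lemma separated_points_of_disjoint_intervals:
  assumes "finite S" "S \<subseteq> open_intervals" "disjoint S"
    and "\<And>I. I \<in> S \<Longrightarrow> I \<inter> A \<noteq> {} \<and> L < diameter I"
  obtains x Y where "\<And>I. I \<in> S \<Longrightarrow> x I \<in> I \<inter> A"
    and "Y \<subseteq> S" "card S \<le> 2 * card Y" "separated_by L x Y"
proof -
  have "\<forall>I\<in>S. \<exists>a b. I = {a<..<b} \<and> a < b"
    using assms(2) unfolding open_intervals_def by blast
  then obtain lo hi where interval: "\<And>I. I \<in> S \<Longrightarrow> {lo I<..<hi I} = I"
    and lo_less_hi: "\<And>I. I \<in> S \<Longrightarrow> lo I < hi I"
    by metis
  have "\<forall>I\<in>S. \<exists>z. z \<in> I \<inter> A"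
    using assms(4) by blast
  then obtain x where x: "\<And>I. I \<in> S \<Longrightarrow> x I \<in> I \<inter> A"
    by metis
  have inside: "lo I < x I \<and> x I < hi I \<and> L < hi I - lo I" if "I \<in> S" for I
  proof -
    have "x I \<in> {lo I<..<hi I}" "L < diameter {lo I<..<hi I}"
      using x[OF that] assms(4)[OF that] interval[OF that] by auto
    then show ?thesis using lo_less_hi[OF that] by simp
  qed
  have apart: "hi I \<le> lo J \<or> hi J \<le> lo I" if "I \<in> S" "J \<in> S" "I \<noteq> J" for I J
  proof (rule disjoint_open_intervals_ordered)
    show "{lo I<..<hi I} \<inter> {lo J<..<hi J} = {}"
      unfolding interval[OF that(1)] interval[OF that(2)] using disjointD[OF assms(3) that] .
  qed (simp_all add: lo_less_hi that)
  show thesis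
    using half_separated_subset[of S lo x hi L, OF assms(1) inside apart] that x by blast
qed

lemma dyadic_scale:
  fixes d :: real
  assumes "0 < d" "d \<le> 2 powr -real k0"
  obtains k where "k0 \<le> k" "2 powr -(real k + 1) < d" "d \<le> 2 powr -real k"
proof -
  define t where "t = -log 2 d"
  have d: "d = 2 powr -t"
    unfolding t_def using assms(1) by simp
  have "log 2 d \<le> log 2 (2 powr -real k0)"
    using assms by (subst log_le_cancel_iff) auto
  then have k0: "int k0 \<le> \<lfloor>t\<rfloor>"
    unfolding t_def by (simp add: le_floor_iff)
  show thesis
  proof (rule that[of "nat \<lfloor>t\<rfloor>"])
    show "k0 \<le> nat \<lfloor>t\<rfloor>" using k0 by linarith
    have nat_floor: "real (nat \<lfloor>t\<rfloor>) = of_int \<lfloor>t\<rfloor>" using k0 by simp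
    show "2 powr -(real (nat \<lfloor>t\<rfloor>) + 1) < d"
      unfolding d nat_floor by (intro powr_less_mono) linarith+
    show "d \<le> 2 powr -real (nat \<lfloor>t\<rfloor>)"
      unfolding d nat_floor by (intro powr_mono) linarith+
  qed
qed

lemma dyadic_weight_eq:
  fixes C Q \<alpha> \<beta> :: real and k :: nat
  assumes "0 < C"
  shows "(4 + 2 * Q * (C / 2 powr -(real k + 1)) powr \<alpha>) * 2 powr (-real k * \<beta>)
    = 4 * (2 powr -\<beta>) ^ k + 2 * Q * (2 * C) powr \<alpha> * (2 powr (\<alpha> - \<beta>)) ^ k"
proof -
  have "C / 2 powr -(real k + 1) = C * 2 powr (real k + 1)"
    unfolding powr_minus_divide by simp
  then have "(C / 2 powr -(real k + 1)) powr \<alpha> = C powr \<alpha> * 2 powr ((real k + 1) * \<alpha>)"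
    using assms by (simp add: powr_mult powr_powr)
  moreover have "2 powr ((real k + 1) * \<alpha>) * 2 powr (-real k * \<beta>) = 2 powr \<alpha> * (2 powr (\<alpha> - \<beta>)) ^ k"
    by (simp add: powr_power powr_add[symmetric] algebra_simps)
  ultimately show ?thesis
    by (simp add: powr_power powr_mult algebra_simps)
qed

lemma sum_power_le_geometric:
  fixes q :: real
  assumes "0 \<le> q" "q < 1"
  shows "(\<Sum>k=k0..N. q ^ k) \<le> q ^ k0 / (1 - q)"
proof -
  have "(\<Sum>k=k0..N. q ^ k) = (if N < k0 then 0 else (q ^ k0 - q ^ Suc N) / (1 - q))"
    using assms by (simp add: sum_gp)
  also have "\<dots> \<le> q ^ k0 / (1 - q)"
    using assms by (auto simp: divide_right_mono)
  finally show ?thesis .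
qed

lemma eventually_two_powr_less:
  assumes "0 < e"
  shows "\<forall>\<^sub>F k in sequentially. 2 powr -real k < e"
proof -
  have "(\<lambda>k::nat. (1/2::real) ^ k) \<longlonglongrightarrow> 0"
    by (intro LIMSEQ_power_zero) auto
  then show ?thesis
    using assms by (auto simp: powr_minus_divide powr_realpow power_one_over order_tendsto_iff)
qed

lemma Inf_eq_if_dense_above:
  fixes S T :: "real set"
  assumes "T \<subseteq> S" "bdd_below S" "\<And>a b. a \<in> S \<Longrightarrow> a < b \<Longrightarrow> b \<in> T"
  shows "Inf T = Inf S"
proof (cases "S = {}")
  case True
  then show ?thesis using assms(1) by simp
next
  case False
  then obtain a where "a \<in> S" by blast
  then have "T \<noteq> {}" using assms(3)[of a "a + 1"] by auto
  then have "Inf S \<le> Inf T"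
    using assms(2,1) by (rule cInf_superset_mono)
  moreover have "Inf T \<le> Inf S"
  proof (rule cInf_greatest[OF False], rule field_le_epsilon)
    fix a e :: real assume "a \<in> S" "0 < e"
    then show "Inf T \<le> a + e"
      using assms bdd_below_mono by (intro cInf_lower) auto
  qed
  ultimately show ?thesis by simp
qed

locale midpoint_family =
  fixes Phi :: "real set set" and C :: real
  assumes intervals: "Phi \<subseteq> open_intervals"
    and C_pos: "0 < C"
    and midpoint_subinterval: "\<forall>a b. 0 \<le> a \<and> a < b \<and> b \<le> 1 \<longrightarrow>
           (\<exists>D\<in>Phi. (a + b) / 2 \<in> D \<and> D \<subseteq> {a<..<b} \<and> (b - a) / diameter D \<le> C)"
begin

lemma interval_around:
  assumes "0 < L" "L/2 \<le> x" "x \<le> 1 - L/2"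
  obtains D where "D \<in> Phi" "x \<in> D" "D \<subseteq> {x - L/2<..<x + L/2}" "L/C \<le> diameter D" "diameter D \<le> L"
proof -
  obtain D where D: "D \<in> Phi" "x \<in> D" "D \<subseteq> {x - L/2<..<x + L/2}" "L / diameter D \<le> C"
    using midpoint_subinterval[rule_format, of "x - L/2" "x + L/2"] assms by auto
  obtain a b where "D = {a<..<b}" "a < b"
    using D(1) intervals unfolding open_intervals_def by blast
  then have "0 < diameter D" by simp
  then have "L/C \<le> diameter D"
    using D(4) C_pos by (simp add: divide_le_eq mult.commute)
  moreover have "diameter D \<le> L"
    using diameter_subset[OF D(3)] assms(1) by simp
  ultimately show thesis using that D by blast
qed

lemma card_mult_le_P_eps:
  assumes "0 \<le> \<alpha>" "0 < L" "finite Y" "separated_by L x Y"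
    and "\<And>i. i \<in> Y \<Longrightarrow> x i \<in> A \<and> L/2 \<le> x i \<and> x i \<le> 1 - L/2"
  shows "ennreal (card Y * (L/C) powr \<alpha>) \<le> P_eps Phi \<alpha> L A"
proof -
  have "\<exists>D. D \<in> Phi \<and> x i \<in> D \<and> D \<subseteq> {x i - L/2<..<x i + L/2} \<and> L/C \<le> diameter D \<and> diameter D \<le> L"
    if "i \<in> Y" for i
    using interval_around[OF assms(2)] assms(5)[OF that] by metis
  then obtain D where D: "\<And>i. i \<in> Y \<Longrightarrow> D i \<in> Phi \<and> x i \<in> D i \<and> D i \<subseteq> {x i - L/2<..<x i + L/2}
      \<and> L/C \<le> diameter (D i) \<and> diameter (D i) \<le> L"
    by metis
  have disj: "D i \<inter> D j = {}" if "i \<in> Y" "j \<in> Y" "i \<noteq> j" for i j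
  proof -
    have "L \<le> \<bar>x i - x j\<bar>" using assms(4) that unfolding separated_by_def by blast
    then have "{x i - L/2<..<x i + L/2} \<inter> {x j - L/2<..<x j + L/2} = {}" by auto
    then show ?thesis using D that by blast
  qed
  then have inj: "inj_on D Y"
    using D by (fastforce simp: inj_on_def)
  have "is_packing Phi L A (D ` Y)"
    unfolding is_packing_def disjoint_def using assms(3,5) D disj intervals
    by (fastforce simp: countable_finite)
  then have "ennreal (\<Sum>I\<in>D ` Y. diameter I powr \<alpha>) \<le> P_eps Phi \<alpha> L A"
    using assms(3) by (intro sum_le_P_eps) auto
  moreover have "card Y * (L/C) powr \<alpha> \<le> (\<Sum>I\<in>D ` Y. diameter I powr \<alpha>)"
  proof -
    have "card Y * (L/C) powr \<alpha> \<le> (\<Sum>i\<in>Y. diameter (D i) powr \<alpha>)"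
      using sum_mono[of Y "\<lambda>_. (L/C) powr \<alpha>"] D assms(1,2) C_pos by (simp add: powr_mono2)
    then show ?thesis by (simp add: sum.reindex[OF inj])
  qed
  ultimately show ?thesis by (meson ennreal_leI order_trans)
qed

lemma card_long_intervals_le:
  assumes "0 \<le> \<alpha>" "0 < L" "A \<subseteq> {0..1}" "0 \<le> Q" "P_eps Phi \<alpha> L A \<le> ennreal Q"
    and "finite S" "S \<subseteq> open_intervals" "disjoint S"
    and "\<And>I. I \<in> S \<Longrightarrow> I \<inter> A \<noteq> {} \<and> L < diameter I"
  shows "real (card S) \<le> 4 + 2 * Q * (C / L) powr \<alpha>"
proof -
  obtain x Y where x: "\<And>I. I \<in> S \<Longrightarrow> x I \<in> I \<inter> A"
    and Y: "Y \<subseteq> S" "card S \<le> 2 * card Y" "separated_by L x Y"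
    using separated_points_of_disjoint_intervals[OF assms(6-9)] by blast
  let ?inner = "{I\<in>Y. L/2 \<le> x I \<and> x I \<le> 1 - L/2}"
  have finY: "finite Y" using Y(1) assms(6) finite_subset by blast
  have "card Y \<le> card ?inner + 2"
  proof (rule card_separated_le_interior[OF finY Y(3)])
    fix I assume "I \<in> Y"
    then have "x I \<in> {0..1}" using x Y(1) assms(3) by blast
    then show "0 \<le> x I \<and> x I \<le> 1" by simp
  qed
  have packed: "ennreal (card ?inner * (L/C) powr \<alpha>) \<le> P_eps Phi \<alpha> L A"
  proof (rule card_mult_le_P_eps[OF assms(1,2)])
    show "finite ?inner" using finY by simp
    show "separated_by L x ?inner" using Y(3) unfolding separated_by_def by blast
  qed (use x Y(1) in auto)
  have "card ?inner * (L/C) powr \<alpha> \<le> Q"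
    using order_trans[OF packed assms(5)] assms(4) by simp
  then have "card ?inner \<le> Q * (C / L) powr \<alpha>"
    using assms(2) C_pos by (simp add: powr_divide field_simps)
  with \<open>card Y \<le> card ?inner + 2\<close> Y(2) show ?thesis by linarith
qed

lemma sum_scale_le:
  assumes "0 \<le> \<alpha>" "0 \<le> \<beta>" "A \<subseteq> {0..1}" "0 \<le> Q"
    and "P_eps Phi \<alpha> (2 powr -(real k + 1)) A \<le> ennreal Q"
    and "finite S" "S \<subseteq> open_intervals" "disjoint S"
    and "\<And>I. I \<in> S \<Longrightarrow> I \<inter> A \<noteq> {} \<and> 2 powr -(real k + 1) < diameter I \<and> diameter I \<le> 2 powr -real k"
  shows "(\<Sum>I\<in>S. diameter I powr \<beta>) \<le> 4 * (2 powr -\<beta>) ^ k + 2 * Q * (2 * C) powr \<alpha> * (2 powr (\<alpha> - \<beta>)) ^ k"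
proof -
  have "(\<Sum>I\<in>S. diameter I powr \<beta>) \<le> (\<Sum>I\<in>S. 2 powr (-real k * \<beta>))"
  proof (rule sum_mono)
    fix I assume I: "I \<in> S"
    have "0 < (2::real) powr -(real k + 1)" by simp
    then have "0 \<le> diameter I" "diameter I \<le> 2 powr -real k"
      using assms(9)[OF I] by linarith+
    then have "diameter I powr \<beta> \<le> (2 powr -real k) powr \<beta>"
      using assms(2) by (rule powr_mono2[rotated])
    then show "diameter I powr \<beta> \<le> 2 powr (-real k * \<beta>)"
      by (simp add: powr_powr)
  qed
  also have "\<dots> = card S * 2 powr (-real k * \<beta>)"
    by simp
  also have "\<dots> \<le> (4 + 2 * Q * (C / 2 powr -(real k + 1)) powr \<alpha>) * 2 powr (-real k * \<beta>)"
    using card_long_intervals_le[OF assms(1) _ assms(3-8)] assms(9) by (intro mult_right_mono) auto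
  also have "\<dots> = 4 * (2 powr -\<beta>) ^ k + 2 * Q * (2 * C) powr \<alpha> * (2 powr (\<alpha> - \<beta>)) ^ k"
    by (rule dyadic_weight_eq[OF C_pos])
  finally show ?thesis .
qed

lemma sum_packing_le:
  assumes "0 \<le> \<alpha>" "\<alpha> < \<beta>" "A \<subseteq> {0..1}" "0 \<le> Q"
    and "\<And>L. 0 < L \<Longrightarrow> L \<le> 2 powr -real k0 \<Longrightarrow> P_eps Phi \<alpha> L A \<le> ennreal Q"
    and "finite F" "is_packing open_intervals (2 powr -real k0) A F"
  shows "(\<Sum>I\<in>F. diameter I powr \<beta>) \<le> 4 * (2 powr -\<beta>) ^ k0 / (1 - 2 powr -\<beta>)
    + 2 * Q * (2 * C) powr \<alpha> * (2 powr (\<alpha> - \<beta>)) ^ k0 / (1 - 2 powr (\<alpha> - \<beta>))"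
proof -
  define q1 q2 c where "q1 = (2::real) powr -\<beta>" and "q2 = (2::real) powr (\<alpha> - \<beta>)"
    and "c = 2 * Q * (2 * C) powr \<alpha>"
  have q: "0 \<le> q1" "q1 < 1" "0 \<le> q2" "q2 < 1" "0 \<le> c"
    using assms(1,2,4) by (auto simp: q1_def q2_def c_def intro!: powr_less_one)
  have F: "F \<subseteq> open_intervals" "disjoint F"
    and meets: "\<And>I. I \<in> F \<Longrightarrow> 0 < diameter I \<and> diameter I \<le> 2 powr -real k0 \<and> I \<inter> A \<noteq> {}"
    using assms(7) unfolding is_packing_def open_intervals_def by auto
  have "\<forall>I\<in>F. \<exists>k. k0 \<le> k \<and> 2 powr -(real k + 1) < diameter I \<and> diameter I \<le> 2 powr -real k"
    using dyadic_scale meets by metis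
  then obtain scale where scale: "\<And>I. I \<in> F \<Longrightarrow>
      k0 \<le> scale I \<and> 2 powr -(real (scale I) + 1) < diameter I \<and> diameter I \<le> 2 powr -real (scale I)"
    by metis
  define N where "N = Max (insert k0 (scale ` F))"
  have scales: "scale ` F \<subseteq> {k0..N}"
    using scale assms(6) unfolding N_def by auto
  have "(\<Sum>I\<in>F. diameter I powr \<beta>) = (\<Sum>k=k0..N. \<Sum>I\<in>{I\<in>F. scale I = k}. diameter I powr \<beta>)"
    using sum.group[OF assms(6) _ scales, of "\<lambda>I. diameter I powr \<beta>"] by simp
  also have "\<dots> \<le> (\<Sum>k=k0..N. 4 * q1 ^ k + c * q2 ^ k)"
  proof (rule sum_mono)
    fix k assume k: "k \<in> {k0..N}"
    have "P_eps Phi \<alpha> (2 powr -(real k + 1)) A \<le> ennreal Q"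
      using k by (intro assms(5)) auto
    then show "(\<Sum>I\<in>{I\<in>F. scale I = k}. diameter I powr \<beta>) \<le> 4 * q1 ^ k + c * q2 ^ k"
      unfolding q1_def q2_def c_def
      using F assms(6) scale meets assms(1,2,3,4)
      by (intro sum_scale_le) (auto simp: pairwise_subset[OF F(2)])
  qed
  also have "\<dots> = 4 * (\<Sum>k=k0..N. q1 ^ k) + c * (\<Sum>k=k0..N. q2 ^ k)"
    by (simp add: sum.distrib sum_distrib_left)
  also have "\<dots> \<le> 4 * (q1 ^ k0 / (1 - q1)) + c * (q2 ^ k0 / (1 - q2))"
    using q by (intro add_mono mult_left_mono sum_power_le_geometric) auto
  finally show ?thesis
    unfolding q1_def q2_def c_def by simp
qed

lemma P_zero_unc_eq_0:
  assumes "0 \<le> \<alpha>" "\<alpha> < \<beta>" "A \<subseteq> {0..1}" "P_zero Phi \<alpha> A < top"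
  shows "P_zero open_intervals \<beta> A = 0"
proof -
  obtain e0 where e0: "0 < e0" "P_eps Phi \<alpha> e0 A < top"
    using assms(4) unfolding P_zero_def by (auto simp: INF_less_iff)
  define Q where "Q = enn2real (P_eps Phi \<alpha> e0 A)"
  have Q: "0 \<le> Q" "P_eps Phi \<alpha> e0 A = ennreal Q"
    unfolding Q_def using e0(2) by (auto simp: ennreal_enn2real less_top)
  define B where "B k = 4 * (2 powr -\<beta>) ^ k / (1 - 2 powr -\<beta>)
    + 2 * Q * (2 * C) powr \<alpha> * (2 powr (\<alpha> - \<beta>)) ^ k / (1 - 2 powr (\<alpha> - \<beta>))" for k :: nat
  have "B \<longlonglongrightarrow> 4 * 0 / (1 - 2 powr -\<beta>) + 2 * Q * (2 * C) powr \<alpha> * 0 / (1 - 2 powr (\<alpha> - \<beta>))"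
    unfolding B_def using assms(1,2) by (intro tendsto_intros LIMSEQ_power_zero) (auto intro!: powr_less_one)
  then have "(\<lambda>k. ennreal (B k)) \<longlonglongrightarrow> 0"
    using tendsto_ennrealI by fastforce
  moreover have "\<forall>\<^sub>F k in sequentially. P_zero open_intervals \<beta> A \<le> ennreal (B k)"
    using eventually_two_powr_less[OF e0(1)]
  proof (rule eventually_mono)
    fix k :: nat assume k: "2 powr -real k < e0"
    have "P_zero open_intervals \<beta> A \<le> P_eps open_intervals \<beta> (2 powr -real k) A"
      unfolding P_zero_def by (rule INF_lower) simp
    also have "\<dots> \<le> ennreal (B k)"
      unfolding B_def
    proof (rule P_eps_le_if_finite_packings, rule sum_packing_le[OF assms(1-3) Q(1)])
      fix L :: real assume "0 < L" "L \<le> 2 powr -real k"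
      then show "P_eps Phi \<alpha> L A \<le> ennreal Q"
        using P_eps_mono[of L e0 Phi Phi A A \<alpha>] k Q(2) by simp
    qed
    finally show "P_zero open_intervals \<beta> A \<le> ennreal (B k)" .
  qed
  ultimately have "P_zero open_intervals \<beta> A \<le> 0"
    by (intro tendsto_le[OF trivial_limit_sequentially _ tendsto_const])
  then show ?thesis by simp
qed

lemma P_meas_unc_eq_0:
  assumes "0 \<le> \<alpha>" "\<alpha> < \<beta>" "E \<subseteq> {0..1}" "P_meas Phi \<alpha> E = 0"
  shows "P_meas open_intervals \<beta> E = 0"
proof -
  have "(INF A\<in>{A. E \<subseteq> (\<Union>j. A j)}. \<Sum>j. P_zero Phi \<alpha> (A j)) < 1"
    using assms(4) unfolding P_meas_def by simp
  then obtain A where A: "E \<subseteq> (\<Union>j. A j)" "(\<Sum>j. P_zero Phi \<alpha> (A j)) < 1"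
    unfolding INF_less_iff by blast
  have "P_zero open_intervals \<beta> (A j \<inter> {0..1}) = 0" for j
  proof (rule P_zero_unc_eq_0[OF assms(1,2)])
    have "P_zero Phi \<alpha> (A j \<inter> {0..1}) \<le> P_zero Phi \<alpha> (A j)"
      by (rule P_zero_mono) auto
    also have "\<dots> < 1"
      using ennreal_suminf_lessD[OF A(2)] .
    finally show "P_zero Phi \<alpha> (A j \<inter> {0..1}) < top"
      by (rule order.strict_trans) simp
  qed auto
  moreover have "E \<subseteq> (\<Union>j. A j \<inter> {0..1})"
    using A(1) assms(3) by auto
  ultimately have "P_meas open_intervals \<beta> E \<le> 0"
    unfolding P_meas_def by (intro INF_lower2[of "\<lambda>j. A j \<inter> {0..1}"]) auto
  then show ?thesis by simp
qed

end

theorem theorem5: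
  fixes Phi :: "real set set" and C :: real
  assumes "Phi \<subseteq> open_intervals"
    and "\<forall>I\<in>Phi. I \<subseteq> {0..1}"
    and "C > 0"
    and "\<forall>a b. 0 \<le> a \<and> a < b \<and> b \<le> 1 \<longrightarrow>
           (\<exists>D\<in>Phi. (a + b) / 2 \<in> D \<and> D \<subseteq> {a<..<b} \<and> (b - a) / diameter D \<le> C)"
  shows "\<forall>E. E \<subseteq> {0..1} \<longrightarrow> dim_P Phi E = dim_P_unc E"
proof (intro allI impI)
  interpret midpoint_family Phi C
    using assms(1,3,4) by unfold_locales
  fix E :: "real set" assume "E \<subseteq> {0..1}"
  show "dim_P Phi E = dim_P_unc E"
    unfolding dim_P_unc_def dim_P_def
  proof (rule Inf_eq_if_dense_above[symmetric])
    show "{\<alpha>. 0 \<le> \<alpha> \<and> P_meas open_intervals \<alpha> E = 0} \<subseteq> {\<alpha>. 0 \<le> \<alpha> \<and> P_meas Phi \<alpha> E = 0}"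
    proof
      fix \<alpha> assume "\<alpha> \<in> {\<alpha>. 0 \<le> \<alpha> \<and> P_meas open_intervals \<alpha> E = 0}"
      then show "\<alpha> \<in> {\<alpha>. 0 \<le> \<alpha> \<and> P_meas Phi \<alpha> E = 0}"
        using P_meas_mono[OF assms(1), of \<alpha> E] by simp
    qed
  qed (use P_meas_unc_eq_0 \<open>E \<subseteq> {0..1}\<close> in \<open>auto intro: bdd_belowI[of _ 0]\<close>)
qed

end
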